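(* Let $G$ be a clique tree with blocks $B_1,\dots,B_b$, each block having at least $3$ vertices. Then $$Z(G)=\sum_{i=1}^{b} Z(B_i)-\sum_{v\in V(G)}\bigl(bi_G(v)-1\bigr).$$
   Context: A block of a connected graph is a maximal connected subgraph without a cut vertex of its own; a clique tree is a connected graph each of whose blocks is a complete graph. For a vertex $v$, the block index $bi_G(v)$ is the number of blocks of $G$ containing $v$. $Z(\cdot)$ denotes the zero forcing number: with each vertex coloured blue or white, the colour-change rule makes the unique white neighbour of a blue vertex blue (if it has exactly one white neighbour); $Z(G)$ is the minimum size of an initially blue set from which repeated application of the rule turns all vertices blue. For a complete graph, $Z(K_m)=m-1$. *)

theory Defs
  imports Main
begin

definition simple_graph :: "'a set \<Rightarrow> ('a \<Rightarrow> 'a \<Rightarrow> bool) \<Rightarrow> bool" where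
  "simple_graph V E \<longleftrightarrow> finite V \<and> (\<forall>u v. E u v \<longrightarrow> E v u) \<and> (\<forall>v. \<not> E v v)
     \<and> (\<forall>u v. E u v \<longrightarrow> u \<in> V \<and> v \<in> V)"

definition induced :: "('a \<Rightarrow> 'a \<Rightarrow> bool) \<Rightarrow> 'a set \<Rightarrow> 'a \<Rightarrow> 'a \<Rightarrow> bool" where
  "induced E S = (\<lambda>u v. E u v \<and> u \<in> S \<and> v \<in> S)"

text \<open>The subgraph induced on S is connected (the empty vertex set counts as connected).\<close>
definition connected_on :: "('a \<Rightarrow> 'a \<Rightarrow> bool) \<Rightarrow> 'a set \<Rightarrow> bool" where
  "connected_on E S \<longleftrightarrow> (\<forall>u\<in>S. \<forall>v\<in>S. (induced E S)\<^sup>*\<^sup>* u v)"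

definition nonseparable :: "('a \<Rightarrow> 'a \<Rightarrow> bool) \<Rightarrow> 'a set \<Rightarrow> bool" where
  "nonseparable E S \<longleftrightarrow> S \<noteq> {} \<and> connected_on E S \<and> (\<forall>v\<in>S. connected_on E (S - {v}))"

definition is_block :: "'a set \<Rightarrow> ('a \<Rightarrow> 'a \<Rightarrow> bool) \<Rightarrow> 'a set \<Rightarrow> bool" where
  "is_block V E S \<longleftrightarrow> S \<subseteq> V \<and> nonseparable E S
     \<and> (\<forall>T. S \<subset> T \<and> T \<subseteq> V \<longrightarrow> \<not> nonseparable E T)"

definition blocks :: "'a set \<Rightarrow> ('a \<Rightarrow> 'a \<Rightarrow> bool) \<Rightarrow> 'a set set" where
  "blocks V E = {S. is_block V E S}"

definition block_index :: "'a set \<Rightarrow> ('a \<Rightarrow> 'a \<Rightarrow> bool) \<Rightarrow> 'a \<Rightarrow> nat" where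
  "block_index V E v = card {B \<in> blocks V E. v \<in> B}"

definition is_clique :: "('a \<Rightarrow> 'a \<Rightarrow> bool) \<Rightarrow> 'a set \<Rightarrow> bool" where
  "is_clique E S \<longleftrightarrow> (\<forall>u\<in>S. \<forall>v\<in>S. u \<noteq> v \<longrightarrow> E u v)"

definition clique_tree :: "'a set \<Rightarrow> ('a \<Rightarrow> 'a \<Rightarrow> bool) \<Rightarrow> bool" where
  "clique_tree V E \<longleftrightarrow> V \<noteq> {} \<and> connected_on E V \<and> (\<forall>B\<in>blocks V E. is_clique E B)"

inductive_set forced :: "'a set \<Rightarrow> ('a \<Rightarrow> 'a \<Rightarrow> bool) \<Rightarrow> 'a set \<Rightarrow> 'a set"
  for V E B0 where
  init: "v \<in> B0 \<Longrightarrow> v \<in> forced V E B0"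
| force: "u \<in> forced V E B0 \<Longrightarrow> v \<in> V \<Longrightarrow> E u v \<Longrightarrow>
          (\<forall>w. E u w \<and> w \<noteq> v \<longrightarrow> w \<in> forced V E B0) \<Longrightarrow> v \<in> forced V E B0"

definition zero_forcing_set :: "'a set \<Rightarrow> ('a \<Rightarrow> 'a \<Rightarrow> bool) \<Rightarrow> 'a set \<Rightarrow> bool" where
  "zero_forcing_set V E B0 \<longleftrightarrow> B0 \<subseteq> V \<and> forced V E B0 = V"

definition Z :: "'a set \<Rightarrow> ('a \<Rightarrow> 'a \<Rightarrow> bool) \<Rightarrow> nat" where
  "Z V E = Min (card ` {B0. zero_forcing_set V E B0})"

end

theory Submission
  imports Defs
begin

text \<open>Both sides equal |V| - b, since Z(K_m) = m - 1 and double counting gives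
  \<Sum> bi(v) = \<Sum> |B_i|. For the lower bound Z(G) \<ge> |V| - b, note that a force u \<rightarrow> v
  turns the whole block containing uv blue, as its other vertices are neighbours of u; so each
  force completes a new block, and at most b vertices are forced. For the upper bound, remove
  a leaf block L = {c} \<union> C attached at the cut vertex c: a zero forcing set of the remaining
  clique tree, together with all but one vertex y of C, forces G, because once c is blue a
  vertex of C - {y} (there is one, as |L| \<ge> 3) has y as its only white neighbour.\<close>

lemma simple_graph_symp: "simple_graph V E \<Longrightarrow> symp E"
  by (simp add: simple_graph_def symp_def)

lemma induced_induced: "S \<subseteq> T \<Longrightarrow> induced (induced E T) S = induced E S"
  by (auto simp: induced_def fun_eq_iff)

lemma induced_rtranclp_mono:
  assumes "(induced E S)\<^sup>*\<^sup>* u v" "S \<subseteq> T"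
  shows "(induced E T)\<^sup>*\<^sup>* u v"
proof -
  have "induced E S \<le> induced E T" using assms(2) by (auto simp: induced_def)
  then show ?thesis using assms(1) by (metis rtranclp_mono predicate2D)
qed

lemma induced_rtranclp_sym:
  assumes "symp E" "(induced E S)\<^sup>*\<^sup>* u v"
  shows "(induced E S)\<^sup>*\<^sup>* v u"
proof -
  have "symp (induced E S)" using assms(1) by (auto simp: symp_def induced_def)
  then show ?thesis using assms(2) by (metis sympD symp_rtranclp)
qed

lemma rtranclp_map:
  assumes "R\<^sup>*\<^sup>* u v" "\<And>a b. R a b \<Longrightarrow> R'\<^sup>*\<^sup>* (f a) (f b)"
  shows "R'\<^sup>*\<^sup>* (f u) (f v)"
  using assms(1) by induction (auto intro: rtranclp_trans assms(2))

lemma rtranclp_crossing_step: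
  "R\<^sup>*\<^sup>* a d \<Longrightarrow> P a \<Longrightarrow> \<not> P d \<Longrightarrow> \<exists>u w. R u w \<and> P u \<and> \<not> P w"
  by (induction rule: rtranclp_induct) auto

lemma connected_onI_root:
  assumes "symp E" "\<And>a. a \<in> S \<Longrightarrow> (induced E S)\<^sup>*\<^sup>* r a"
  shows "connected_on E S"
  unfolding connected_on_def
  using assms induced_rtranclp_sym[OF assms(1)] by (meson rtranclp_trans)

lemma connected_on_singleton: "connected_on E {x}"
  by (simp add: connected_on_def)

lemma connected_on_induced: "S \<subseteq> T \<Longrightarrow> connected_on (induced E T) S = connected_on E S"
  by (simp add: connected_on_def induced_induced)

lemma nonseparable_induced:
  assumes "S \<subseteq> T"
  shows "nonseparable (induced E T) S = nonseparable E S"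
proof -
  have "\<And>v. connected_on (induced E T) (S - {v}) = connected_on E (S - {v})"
    using assms by (intro connected_on_induced) auto
  then show ?thesis by (simp add: nonseparable_def connected_on_induced[OF assms])
qed

definition component :: "('a \<Rightarrow> 'a \<Rightarrow> bool) \<Rightarrow> 'a set \<Rightarrow> 'a \<Rightarrow> 'a set" where
  "component E S a = {v \<in> S. (induced E S)\<^sup>*\<^sup>* a v}"

lemma component_subset: "component E S a \<subseteq> S"
  by (auto simp: component_def)

lemma component_self: "a \<in> S \<Longrightarrow> a \<in> component E S a"
  by (auto simp: component_def)

lemma component_closed:
  assumes "v \<in> component E S a" "w \<in> S" "E v w"
  shows "w \<in> component E S a"
proof -
  have "induced E S v w" using assms by (auto simp: component_def induced_def)
  then show ?thesis using assms by (auto simp: component_def intro: rtranclp.rtrancl_into_rtrancl)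
qed

lemma forced_subset: "B0 \<subseteq> V \<Longrightarrow> forced V E B0 \<subseteq> V"
proof
  fix x assume "x \<in> forced V E B0" "B0 \<subseteq> V"
  then show "x \<in> V" by (induction rule: forced.induct) auto
qed

text \<open>A \<subseteq>-maximal S with |S| \<le> |B0| + #(cliques inside S) is closed under forcing:
  if u forces v \<notin> S, the clique containing uv lies in S \<union> {v}, so S \<union> {v} qualifies too.\<close>
lemma card_le_zero_forcing_set_plus_clique_cover:
  assumes finV: "finite V" and fin: "finite \<F>" and cliques: "\<forall>F\<in>\<F>. is_clique E F"
    and cover: "\<And>u v. E u v \<Longrightarrow> \<exists>F\<in>\<F>. u \<in> F \<and> v \<in> F"
    and zf: "zero_forcing_set V E B0"
  shows "card V \<le> card B0 + card \<F>"
proof -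
  have B0V: "B0 \<subseteq> V" and forced_V: "forced V E B0 = V"
    using zf by (auto simp: zero_forcing_set_def)
  define SS where "SS = {S. B0 \<subseteq> S \<and> S \<subseteq> V \<and> card S \<le> card B0 + card {F\<in>\<F>. F \<subseteq> S}}"
  have "finite SS" using finV by (auto simp: SS_def intro: finite_subset[of _ "Pow V"])
  moreover have "B0 \<in> SS" using B0V by (auto simp: SS_def)
  ultimately obtain S where S: "S \<in> SS" and S_max: "\<And>T. T \<in> SS \<Longrightarrow> S \<subseteq> T \<Longrightarrow> S = T"
    using finite_has_maximal2 by metis
  have SV: "S \<subseteq> V" and B0S: "B0 \<subseteq> S" and S_card: "card S \<le> card B0 + card {F\<in>\<F>. F \<subseteq> S}"
    using S by (auto simp: SS_def)
  have finS: "finite S" using SV finV finite_subset by blast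
  have "forced V E B0 \<subseteq> S"
  proof
    fix x assume "x \<in> forced V E B0"
    then show "x \<in> S"
    proof (induction rule: forced.induct)
      case (init v) then show ?case using B0S by auto
    next
      case (force u v)
      show ?case
      proof (rule ccontr)
        assume vS: "v \<notin> S"
        obtain F where F: "F \<in> \<F>" "u \<in> F" "v \<in> F" using cover force by blast
        have "F \<subseteq> insert v S"
        proof
          fix x assume "x \<in> F"
          then show "x \<in> insert v S"
            using force cliques F unfolding is_clique_def by (metis insertCI)
        qed
        then have "insert F {F\<in>\<F>. F \<subseteq> S} \<subseteq> {F\<in>\<F>. F \<subseteq> insert v S}" using F by auto
        moreover have "F \<notin> {F\<in>\<F>. F \<subseteq> S}" using F vS by auto
        ultimately have "card {F\<in>\<F>. F \<subseteq> S} + 1 \<le> card {F\<in>\<F>. F \<subseteq> insert v S}"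
          using fin by (metis (no_types, lifting) Suc_eq_plus1 card_insert_disjoint card_mono
              finite_subset mem_Collect_eq subsetI)
        moreover have "card (insert v S) = card S + 1" using vS finS by simp
        ultimately have "insert v S \<in> SS" using S_card B0S SV force by (auto simp: SS_def)
        then show False using S_max vS by blast
      qed
    qed
  qed
  then have "card V \<le> card B0 + card {F\<in>\<F>. F \<subseteq> V}" using S_card SV forced_V by auto
  also have "card {F\<in>\<F>. F \<subseteq> V} \<le> card \<F>" using fin by (intro card_mono) auto
  finally show ?thesis by simp
qed

lemma simple_graph_induced: "simple_graph V E \<Longrightarrow> S \<subseteq> V \<Longrightarrow> simple_graph S (induced E S)"
  by (auto simp: simple_graph_def induced_def intro: finite_subset)

lemma Z_eqI:
  assumes "finite V" "zero_forcing_set V E B0" "card B0 \<le> k"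
    and "\<And>B1. zero_forcing_set V E B1 \<Longrightarrow> k \<le> card B1"
  shows "Z V E = k"
proof -
  have fin: "finite {B0. zero_forcing_set V E B0}"
    using assms(1) by (auto simp: zero_forcing_set_def intro: finite_subset[of _ "Pow V"])
  have "Z V E \<in> card ` {B0. zero_forcing_set V E B0}"
    unfolding Z_def using fin assms(2) by (intro Min_in) auto
  then have "k \<le> Z V E" using assms(4) by auto
  moreover have "Z V E \<le> card B0" unfolding Z_def using fin assms(2) by (intro Min_le) auto
  ultimately show ?thesis using assms(3) by simp
qed

lemma clique_zero_forcing_set:
  assumes sg: "simple_graph V E" and clique: "is_clique E V" and "y \<in> V" "2 \<le> card V"
  shows "zero_forcing_set V E (V - {y})"
proof -
  have "card (V - {y}) \<noteq> 0" using assms(3,4) by (simp add: card_Diff_singleton_if)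
  then have "V - {y} \<noteq> {}" by force
  then obtain z where z: "z \<in> V" "z \<noteq> y" by blast
  have "y \<in> forced V E (V - {y})"
  proof (rule forced.force)
    show "z \<in> forced V E (V - {y})" using z by (auto intro: forced.init)
    show "E z y" using clique z \<open>y \<in> V\<close> by (auto simp: is_clique_def)
    show "\<forall>w. E z w \<and> w \<noteq> y \<longrightarrow> w \<in> forced V E (V - {y})"
      using sg by (auto simp: simple_graph_def intro: forced.init)
  qed fact
  then have "V \<subseteq> forced V E (V - {y})" by (auto intro: forced.init)
  then show ?thesis using forced_subset[of "V - {y}" V E] by (auto simp: zero_forcing_set_def)
qed

lemma Z_clique:
  assumes sg: "simple_graph V E" and clique: "is_clique E V" and two: "2 \<le> card V"
  shows "Z V E = card V - 1"
proof -
  have finV: "finite V" using sg by (simp add: simple_graph_def)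
  obtain y where y: "y \<in> V" using two by (metis card.empty ex_in_conv not_numeral_le_zero)
  have cover: "\<And>u v. E u v \<Longrightarrow> \<exists>F\<in>{V}. u \<in> F \<and> v \<in> F"
    using sg by (simp add: simple_graph_def)
  show ?thesis
  proof (rule Z_eqI[OF finV clique_zero_forcing_set[OF sg clique y two]])
    show "card (V - {y}) \<le> card V - 1" using y finV by simp
    fix B1 assume "zero_forcing_set V E B1"
    then have "card V \<le> card B1 + card {V}"
      using clique cover by (intro card_le_zero_forcing_set_plus_clique_cover[OF finV]) auto
    then show "card V - 1 \<le> card B1" by simp
  qed
qed

lemma edge_nonseparable:
  assumes "symp E" "E u v" "u \<noteq> v"
  shows "nonseparable E {u, v}"
proof -
  have "connected_on E {u, v}"
    using assms(2) by (intro connected_onI_root[OF assms(1), of _ u])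
      (auto simp: induced_def intro: r_into_rtranclp)
  moreover have "connected_on E ({u, v} - {w})" if "w \<in> {u, v}" for w
    using that assms(3) by (auto simp: insert_Diff_if connected_on_singleton)
  ultimately show ?thesis by (simp add: nonseparable_def)
qed

lemma block_subset: "B \<in> blocks V E \<Longrightarrow> B \<subseteq> V"
  by (simp add: blocks_def is_block_def)

lemma finite_blocks: "finite V \<Longrightarrow> finite (blocks V E)"
  by (auto simp: blocks_def is_block_def intro: finite_subset[of _ "Pow V"])

lemma nonseparable_subset_block:
  assumes "finite V" "S \<subseteq> V" "nonseparable E S"
  obtains B where "B \<in> blocks V E" "S \<subseteq> B"
proof -
  let ?T = "{T. T \<subseteq> V \<and> nonseparable E T}"
  have "finite ?T" using assms(1) by (auto intro: finite_subset[of _ "Pow V"])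
  then obtain B where B: "B \<in> ?T" "S \<subseteq> B" and B_max: "\<forall>T\<in>?T. B \<subseteq> T \<longrightarrow> B = T"
    using finite_has_maximal2[of ?T S] assms by blast
  then have "B \<in> blocks V E" by (auto simp: blocks_def is_block_def)
  then show thesis using that B by blast
qed

lemma edge_in_block:
  assumes "simple_graph V E" "E u v"
  obtains B where "B \<in> blocks V E" "u \<in> B" "v \<in> B"
proof -
  have "symp E" using assms(1) by (rule simple_graph_symp)
  then have "nonseparable E {u, v}"
    using assms by (intro edge_nonseparable) (auto simp: simple_graph_def)
  moreover have "{u, v} \<subseteq> V" "finite V" using assms by (auto simp: simple_graph_def)
  ultimately obtain B where "B \<in> blocks V E" "{u, v} \<subseteq> B"
    using nonseparable_subset_block by metis
  then show thesis using that by simp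
qed

lemma sum_block_index:
  assumes "finite V"
  shows "(\<Sum>v\<in>V. block_index V E v) = (\<Sum>B\<in>blocks V E. card B)"
proof -
  have "(\<Sum>v\<in>V. block_index V E v) = (\<Sum>v\<in>V. \<Sum>B\<in>{B\<in>blocks V E. v \<in> B}. 1)"
    by (simp add: block_index_def)
  also have "\<dots> = (\<Sum>B\<in>blocks V E. \<Sum>v\<in>{v\<in>V. v \<in> B}. 1)"
    by (rule sum.swap_restrict[OF assms finite_blocks[OF assms]])
  also have "\<dots> = (\<Sum>B\<in>blocks V E. card B)"
  proof (rule sum.cong[OF refl])
    fix B assume "B \<in> blocks V E"
    then have "{v\<in>V. v \<in> B} = B" using block_subset by blast
    then show "(\<Sum>v\<in>{v\<in>V. v \<in> B}. 1) = card B" by simp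
  qed
  finally show ?thesis .
qed

definition cuts_off :: "'a set \<Rightarrow> ('a \<Rightarrow> 'a \<Rightarrow> bool) \<Rightarrow> 'a \<Rightarrow> 'a set \<Rightarrow> bool" where
  "cuts_off V E c C \<longleftrightarrow> c \<in> V \<and> C \<subseteq> V - {c} \<and> C \<noteq> {} \<and> V - {c} - C \<noteq> {}
     \<and> (\<forall>u\<in>C. \<forall>w. E u w \<longrightarrow> w \<in> C \<or> w = c)"

lemma cut_off_exists:
  assumes sg: "simple_graph V E" and "V \<noteq> {}" "connected_on E V" "\<not> nonseparable E V"
  obtains c C where "cuts_off V E c C"
proof -
  obtain c where c: "c \<in> V" "\<not> connected_on E (V - {c})"
    using assms by (auto simp: nonseparable_def)
  then obtain a b where ab: "a \<in> V - {c}" "b \<in> V - {c}" "\<not> (induced E (V - {c}))\<^sup>*\<^sup>* a b"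
    by (auto simp: connected_on_def)
  have "cuts_off V E c (component E (V - {c}) a)"
    unfolding cuts_off_def
  proof (intro conjI ballI allI impI)
    show "component E (V - {c}) a \<noteq> {}" using component_self[OF ab(1), of E] by auto
    show "V - {c} - component E (V - {c}) a \<noteq> {}" using ab by (auto simp: component_def)
    fix u w assume "u \<in> component E (V - {c}) a" "E u w"
    moreover have "w \<in> V" using \<open>E u w\<close> sg by (auto simp: simple_graph_def)
    ultimately show "w \<in> component E (V - {c}) a \<or> w = c" using component_closed by fastforce
  qed (use c component_subset[of E "V - {c}" a] in auto)
  then show thesis by (rule that)
qed

lemma minimal_cut_off_exists:
  assumes "finite V" "cuts_off V E c C"
  obtains c C where "cuts_off V E c C" "\<And>c' C'. cuts_off V E c' C' \<Longrightarrow> \<not> C' \<subset> C"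
proof -
  let ?C = "{C. \<exists>c. cuts_off V E c C}"
  have "finite ?C" using assms(1) by (auto simp: cuts_off_def intro: finite_subset[of _ "Pow V"])
  moreover have "C \<in> ?C" using assms(2) by blast
  ultimately obtain C' where C': "C' \<in> ?C" and min: "\<And>C''. C'' \<in> ?C \<Longrightarrow> C'' \<subseteq> C' \<Longrightarrow> C' = C''"
    using finite_has_minimal2[of ?C C] by metis
  obtain c' where "cuts_off V E c' C'" using C' by blast
  moreover have "\<not> C'' \<subset> C'" if "cuts_off V E c'' C''" for c'' C''
    using min[of C''] that by blast
  ultimately show thesis by (rule that)
qed

text \<open>Paths inside a nonseparable S avoiding c cannot leave C, so S lies on one side of c.\<close>
lemma nonseparable_cut_off_side:
  assumes cut: "cuts_off V E c C" and ns: "nonseparable E S"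
  shows "S \<inter> C = {} \<or> S \<subseteq> insert c C"
proof (rule ccontr)
  assume "\<not> (S \<inter> C = {} \<or> S \<subseteq> insert c C)"
  then obtain a t where a: "a \<in> S" "a \<in> C" and t: "t \<in> S" "t \<notin> insert c C" by auto
  have "connected_on E (S - {c})"
    using ns by (cases "c \<in> S") (auto simp: nonseparable_def)
  moreover have "a \<in> S - {c}" "t \<in> S - {c}" using a t cut by (auto simp: cuts_off_def)
  ultimately have "(induced E (S - {c}))\<^sup>*\<^sup>* a t" by (auto simp: connected_on_def)
  then obtain u w where "induced E (S - {c}) u w" "u \<in> C" "w \<notin> C"
    using rtranclp_crossing_step[of "induced E (S - {c})" a t "\<lambda>x. x \<in> C"] a t by auto
  then show False using cut by (auto simp: induced_def cuts_off_def)
qed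

lemma cut_vertex_adjacent:
  assumes "symp E" "connected_on E V" "cuts_off V E c C"
  obtains a where "a \<in> C" "E c a"
proof -
  obtain a d where "a \<in> C" "d \<in> V - {c} - C" "C \<subseteq> V"
    using assms(3) by (auto simp: cuts_off_def)
  then have "(induced E V)\<^sup>*\<^sup>* a d" using assms(2) by (auto simp: connected_on_def)
  then obtain u w where "induced E V u w" "u \<in> C" "w \<notin> C"
    using rtranclp_crossing_step[of "induced E V" a d "\<lambda>x. x \<in> C"] \<open>a \<in> C\<close> \<open>d \<in> V - {c} - C\<close> by blast
  then have "E u c" using assms(3) by (auto simp: induced_def cuts_off_def)
  then show thesis using that assms(1) \<open>u \<in> C\<close> by (meson sympD)
qed

lemma minimal_cut_off_connected:
  assumes cut: "cuts_off V E c C" and min: "\<And>c' C'. cuts_off V E c' C' \<Longrightarrow> \<not> C' \<subset> C"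
  shows "connected_on E C"
  unfolding connected_on_def
proof (intro ballI)
  fix a b assume "a \<in> C" "b \<in> C"
  have C: "c \<in> V" "C \<subseteq> V - {c}" "\<forall>u\<in>C. \<forall>w. E u w \<longrightarrow> w \<in> C \<or> w = c"
    using cut by (auto simp: cuts_off_def)
  have "cuts_off V E c (component E C a)" if sub: "component E C a \<subset> C"
    unfolding cuts_off_def
  proof (intro conjI ballI allI impI)
    show "component E C a \<noteq> {}" using component_self[OF \<open>a \<in> C\<close>, of E] by auto
    show "c \<in> V" "component E C a \<subseteq> V - {c}" using C sub by auto
    show "V - {c} - component E C a \<noteq> {}" using C sub by blast
    fix u w assume u: "u \<in> component E C a" and "E u w"
    have "u \<in> C" using u sub by blast
    then have "w \<in> C \<or> w = c" using C(3) \<open>E u w\<close> by blast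
    then show "w \<in> component E C a \<or> w = c" using component_closed[OF u _ \<open>E u w\<close>] by blast
  qed
  then have "component E C a = C"
    using min[of c "component E C a"] component_subset[of E C a] by blast
  then show "(induced E C)\<^sup>*\<^sup>* a b" using \<open>b \<in> C\<close> by (auto simp: component_def)
qed

text \<open>Were C - {w} not reachable from c, the part beyond w would be cut off by w,
  contradicting minimality of C.\<close>
lemma minimal_cut_off_delete_connected:
  assumes sym: "symp E" and cut: "cuts_off V E c C"
    and min: "\<And>c' C'. cuts_off V E c' C' \<Longrightarrow> \<not> C' \<subset> C" and w: "w \<in> C"
  shows "connected_on E (insert c C - {w})"
proof (rule connected_onI_root[OF sym, of _ c])
  define S where "S = insert c C - {w}"
  have C: "c \<in> V" "C \<subseteq> V - {c}" "\<forall>u\<in>C. \<forall>v. E u v \<longrightarrow> v \<in> C \<or> v = c"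
    using cut by (auto simp: cuts_off_def)
  fix x assume "x \<in> insert c C - {w}"
  then have x: "x \<in> S" by (simp add: S_def)
  show "(induced E (insert c C - {w}))\<^sup>*\<^sup>* c x"
  proof (rule ccontr)
    assume unreachable: "\<not> (induced E (insert c C - {w}))\<^sup>*\<^sup>* c x"
    have c_notin: "c \<notin> component E S x"
    proof
      assume "c \<in> component E S x"
      then have "(induced E S)\<^sup>*\<^sup>* x c" by (simp add: component_def)
      then have "(induced E S)\<^sup>*\<^sup>* c x" by (rule induced_rtranclp_sym[OF sym])
      then show False using unreachable by (simp add: S_def)
    qed
    then have sub: "component E S x \<subseteq> C - {w}"
      using component_subset[of E S x] by (auto simp: S_def)
    have "cuts_off V E w (component E S x)"
      unfolding cuts_off_def
    proof (intro conjI ballI allI impI)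
      show "component E S x \<noteq> {}" using component_self[OF x, of E] by auto
      show "w \<in> V" "component E S x \<subseteq> V - {w}" using C w sub by auto
      show "V - {w} - component E S x \<noteq> {}" using C w c_notin by blast
      fix u v assume u: "u \<in> component E S x" and "E u v"
      have "u \<in> C" using u sub by blast
      then have "v \<in> C \<or> v = c" using C(3) \<open>E u v\<close> by blast
      then have "v = w \<or> v \<in> S" by (auto simp: S_def)
      then show "v \<in> component E S x \<or> v = w" using component_closed[OF u _ \<open>E u v\<close>] by blast
    qed
    moreover have "component E S x \<subset> C" using sub w by blast
    ultimately show False using min by blast
  qed
qed

lemma minimal_cut_off_block:
  assumes sg: "simple_graph V E" and con: "connected_on E V" and cut: "cuts_off V E c C"
    and min: "\<And>c' C'. cuts_off V E c' C' \<Longrightarrow> \<not> C' \<subset> C"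
  shows "is_block V E (insert c C)"
proof -
  have sym: "symp E" using sg by (rule simple_graph_symp)
  have c: "c \<in> V" "c \<notin> C" "C \<subseteq> V" "C \<noteq> {}" using cut by (auto simp: cuts_off_def)
  have conC: "connected_on E C" using cut min by (rule minimal_cut_off_connected)
  obtain a where a: "a \<in> C" "E c a" using cut_vertex_adjacent[OF sym con cut] .
  have "connected_on E (insert c C)"
  proof (rule connected_onI_root[OF sym, of _ c])
    fix x assume "x \<in> insert c C"
    moreover have "(induced E (insert c C))\<^sup>*\<^sup>* c x" if "x \<in> C"
    proof -
      have "(induced E C)\<^sup>*\<^sup>* a x" using conC a that by (auto simp: connected_on_def)
      then have "(induced E (insert c C))\<^sup>*\<^sup>* a x" by (rule induced_rtranclp_mono) auto
      moreover have "induced E (insert c C) c a" using a by (auto simp: induced_def)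
      ultimately show ?thesis by (meson converse_rtranclp_into_rtranclp)
    qed
    ultimately show "(induced E (insert c C))\<^sup>*\<^sup>* c x" by auto
  qed
  moreover have "connected_on E (insert c C - {w})" if "w \<in> insert c C" for w
    using that conC c minimal_cut_off_delete_connected[OF sym cut min] by auto
  moreover have "\<not> nonseparable E T" if "insert c C \<subset> T" for T
    using nonseparable_cut_off_side[OF cut] that c by blast
  ultimately show ?thesis using c by (auto simp: is_block_def nonseparable_def)
qed

lemma connected_on_delete_cut_off:
  assumes sym: "symp E" and con: "connected_on E V" and cut: "cuts_off V E c C"
  shows "connected_on E (V - C)"
  unfolding connected_on_def
proof (intro ballI)
  have C: "c \<notin> C" "\<forall>u\<in>C. \<forall>w. E u w \<longrightarrow> w \<in> C \<or> w = c" using cut by (auto simp: cuts_off_def)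
  define f where "f w = (if w \<in> C then c else w)" for w
  have step: "(induced E (V - C))\<^sup>*\<^sup>* (f a) (f b)" if "induced E V a b" for a b
  proof -
    have ab: "E a b" "a \<in> V" "b \<in> V" using that by (auto simp: induced_def)
    have ba: "E b a" using sym ab(1) by (rule sympD)
    show ?thesis
    proof (cases "a \<in> C \<or> b \<in> C")
      case True
      then have "f a = c" "f b = c" using C ab(1) ba by (auto simp: f_def)
      then show ?thesis by simp
    next
      case False
      then have "induced E (V - C) (f a) (f b)" using ab by (simp add: f_def induced_def)
      then show ?thesis by blast
    qed
  qed
  fix u v assume "u \<in> V - C" "v \<in> V - C"
  then have "(induced E V)\<^sup>*\<^sup>* u v" using con by (auto simp: connected_on_def)
  then have "(induced E (V - C))\<^sup>*\<^sup>* (f u) (f v)"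
    using rtranclp_map[of "induced E V" u v "induced E (V - C)" f] step by blast
  then show "(induced E (V - C))\<^sup>*\<^sup>* u v" using \<open>u \<in> V - C\<close> \<open>v \<in> V - C\<close> by (simp add: f_def)
qed

lemma block_delete_cut_off:
  assumes cut: "cuts_off V E c C" and leaf: "is_block V E (insert c C)"
    and B: "B \<in> blocks V E" "B \<noteq> insert c C"
  shows "B \<in> blocks (V - C) (induced E (V - C))"
proof -
  have BV: "B \<subseteq> V" and nsB: "nonseparable E B"
    and B_max: "\<And>T. B \<subset> T \<Longrightarrow> T \<subseteq> V \<Longrightarrow> \<not> nonseparable E T"
    using B by (auto simp: blocks_def is_block_def)
  have "\<not> B \<subseteq> insert c C" using B_max[of "insert c C"] leaf B(2) by (auto simp: is_block_def)
  then have "B \<subseteq> V - C" using nonseparable_cut_off_side[OF cut nsB] BV by blast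
  then show ?thesis unfolding blocks_def is_block_def mem_Collect_eq
  proof (intro conjI allI impI)
    show "nonseparable (induced E (V - C)) B" using nsB nonseparable_induced[OF \<open>B \<subseteq> V - C\<close>] by simp
    fix T assume "B \<subset> T \<and> T \<subseteq> V - C"
    then show "\<not> nonseparable (induced E (V - C)) T"
      using B_max[of T] nonseparable_induced[of T "V - C" E] by auto
  qed
qed

lemma block_of_delete_cut_off:
  assumes sg: "simple_graph V E" and con: "connected_on E V" and cut: "cuts_off V E c C"
    and B: "B \<in> blocks (V - C) (induced E (V - C))"
  shows "B \<in> blocks V E"
proof -
  have sym: "symp E" using sg by (rule simple_graph_symp)
  have C: "c \<in> V - C" "C \<subseteq> V" "V - {c} - C \<noteq> {}" using cut by (auto simp: cuts_off_def)
  have BV: "B \<subseteq> V - C" and nsB: "nonseparable E B"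
    and B_max: "\<And>T. B \<subset> T \<Longrightarrow> T \<subseteq> V - C \<Longrightarrow> \<not> nonseparable E T"
    using B by (auto simp: blocks_def is_block_def nonseparable_induced)
  obtain d where d: "d \<in> V - C" "E c d"
  proof -
    obtain d0 where "d0 \<in> V - C" "d0 \<noteq> c" using C by blast
    then have "(induced E (V - C))\<^sup>*\<^sup>* c d0"
      using connected_on_delete_cut_off[OF sym con cut] C by (auto simp: connected_on_def)
    then obtain u w where "induced E (V - C) u w" "u = c" "w \<noteq> c"
      using rtranclp_crossing_step[of "induced E (V - C)" c d0 "\<lambda>x. x = c"] \<open>d0 \<noteq> c\<close> by auto
    then show thesis using that by (auto simp: induced_def)
  qed
  have "\<not> nonseparable E T" if T: "B \<subset> T" "T \<subseteq> V" for T
  proof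
    assume nsT: "nonseparable E T"
    then consider "T \<subseteq> V - C" | "T \<subseteq> insert c C"
      using nonseparable_cut_off_side[OF cut] T(2) by blast
    then show False
    proof cases
      case 1
      then show False using B_max T(1) nsT by blast
    next
      case 2
      then have "B = {c}" using T(1) BV nsB by (auto simp: nonseparable_def)
      moreover have "c \<noteq> d" using d sg by (auto simp: simple_graph_def)
      then have "nonseparable E {c, d}" using d(2) by (rule edge_nonseparable[OF sym, rotated])
      ultimately show False using B_max[of "{c, d}"] C(1) d(1) \<open>c \<noteq> d\<close> by auto
    qed
  qed
  then show ?thesis using nsB BV unfolding blocks_def is_block_def by blast
qed

lemma blocks_delete_cut_off:
  assumes "simple_graph V E" "connected_on E V" "cuts_off V E c C" "is_block V E (insert c C)"
  shows "blocks V E = insert (insert c C) (blocks (V - C) (induced E (V - C)))"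
proof (intro equalityI subsetI)
  fix B assume "B \<in> blocks V E"
  then show "B \<in> insert (insert c C) (blocks (V - C) (induced E (V - C)))"
    using block_delete_cut_off[OF assms(3,4), of B] by blast
next
  fix B assume "B \<in> insert (insert c C) (blocks (V - C) (induced E (V - C)))"
  then show "B \<in> blocks V E"
    using block_of_delete_cut_off[OF assms(1-3), of B] assms(4) by (auto simp: blocks_def)
qed

text \<open>Once c is blue, some vertex of C - {y} has y as its only white neighbour.\<close>
lemma zero_forcing_set_extend_cut_off:
  assumes sg: "simple_graph V E" and cut: "cuts_off V E c C" and clique: "is_clique E (insert c C)"
    and y: "y \<in> C" and two: "2 \<le> card C"
    and zf: "zero_forcing_set (V - C) (induced E (V - C)) B0"
  shows "zero_forcing_set V E (B0 \<union> (C - {y}))"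
proof -
  let ?B = "B0 \<union> (C - {y})"
  have C: "c \<in> V - C" "C \<subseteq> V" "\<forall>u\<in>C. \<forall>w. E u w \<longrightarrow> w \<in> C \<or> w = c"
    using cut by (auto simp: cuts_off_def)
  have edges: "\<forall>u v. E u v \<longrightarrow> E v u \<and> u \<in> V \<and> v \<in> V" using sg by (auto simp: simple_graph_def)
  have B0: "B0 \<subseteq> V - C" "forced (V - C) (induced E (V - C)) B0 = V - C"
    using zf by (auto simp: zero_forcing_set_def)
  have "card (C - {y}) \<noteq> 0" using y two by (simp add: card_Diff_singleton_if)
  then have "C - {y} \<noteq> {}" by force
  then obtain z where z: "z \<in> C" "z \<noteq> y" by blast
  have y_forced: "y \<in> forced V E ?B" if c_forced: "c \<in> forced V E ?B"
  proof (rule forced.force)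
    show "z \<in> forced V E ?B" using z by (auto intro: forced.init)
    show "E z y" using clique z y by (auto simp: is_clique_def)
    show "\<forall>w. E z w \<and> w \<noteq> y \<longrightarrow> w \<in> forced V E ?B"
      using C(3) z c_forced by (auto intro: forced.init)
  qed (use y C in auto)
  have "x \<in> forced V E ?B" if "x \<in> forced (V - C) (induced E (V - C)) B0" for x
    using that
  proof (induction rule: forced.induct)
    case (init v) then show ?case by (auto intro: forced.init)
  next
    case (force u v)
    have "w \<in> forced V E ?B" if w: "E u w" "w \<noteq> v" for w
    proof (cases "w \<in> C")
      case False
      then show ?thesis using force w edges by (auto simp: induced_def)
    next
      case True
      then have "u = c" using C(3) w edges force.hyps by (auto simp: induced_def)
      then have "y \<in> forced V E ?B" using y_forced force.IH by blast
      then show ?thesis using True by (cases "w = y") (auto intro: forced.init)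
    qed
    then show ?case using force edges by (auto simp: induced_def intro: forced.force)
  qed
  then have "V - C \<subseteq> forced V E ?B" using B0(2) by blast
  then have "V \<subseteq> forced V E ?B" using y_forced C(1) by (auto intro: forced.init)
  moreover have "?B \<subseteq> V" using B0(1) C(2) by blast
  ultimately show ?thesis using forced_subset[of ?B V E] by (auto simp: zero_forcing_set_def)
qed

lemma clique_tree_delete_cut_off:
  assumes sg: "simple_graph V E" and tree: "clique_tree V E" and cut: "cuts_off V E c C"
    and leaf: "is_block V E (insert c C)"
  shows "clique_tree (V - C) (induced E (V - C))"
  unfolding clique_tree_def
proof (intro conjI ballI)
  have con: "connected_on E V" using tree by (simp add: clique_tree_def)
  show "V - C \<noteq> {}" using cut by (auto simp: cuts_off_def)
  show "connected_on (induced E (V - C)) (V - C)"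
    using connected_on_delete_cut_off[OF simple_graph_symp[OF sg] con cut]
    by (simp add: connected_on_induced)
  fix B assume B: "B \<in> blocks (V - C) (induced E (V - C))"
  then have "is_clique E B"
    using tree blocks_delete_cut_off[OF sg con cut leaf] by (auto simp: clique_tree_def)
  moreover have "B \<subseteq> V - C" using B by (rule block_subset)
  ultimately show "is_clique (induced E (V - C)) B" by (auto simp: is_clique_def induced_def)
qed

lemma blocks_nonseparable: "nonseparable E V \<Longrightarrow> blocks V E = {V}"
  by (auto simp: blocks_def is_block_def)

lemma clique_tree_zero_forcing_set:
  assumes "simple_graph V E" "clique_tree V E" "\<forall>B\<in>blocks V E. 3 \<le> card B"
  shows "\<exists>B0. zero_forcing_set V E B0 \<and> card B0 + card (blocks V E) \<le> card V"
  using assms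
proof (induction "card V" arbitrary: V E rule: less_induct)
  case less
  have sg: "simple_graph V E" and finV: "finite V" using less.prems by (auto simp: simple_graph_def)
  have V: "V \<noteq> {}" "connected_on E V" and cliques: "\<forall>B\<in>blocks V E. is_clique E B"
    using less.prems by (auto simp: clique_tree_def)
  show ?case
  proof (cases "nonseparable E V")
    case True
    then have blocks: "blocks V E = {V}" by (rule blocks_nonseparable)
    then have "3 \<le> card V" "is_clique E V" using less.prems cliques by auto
    moreover obtain y where "y \<in> V" using V by blast
    ultimately show ?thesis using clique_zero_forcing_set[OF sg] blocks finV by fastforce
  next
    case False
    obtain c0 C0 where "cuts_off V E c0 C0" using cut_off_exists[OF sg V False] .
    then obtain c C where cut: "cuts_off V E c C"
      and min: "\<And>c' C'. cuts_off V E c' C' \<Longrightarrow> \<not> C' \<subset> C"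
      using minimal_cut_off_exists[OF finV] by metis
    have leaf: "is_block V E (insert c C)" using minimal_cut_off_block[OF sg V(2) cut min] .
    have C: "c \<in> V - C" "C \<subseteq> V" "C \<noteq> {}" using cut by (auto simp: cuts_off_def)
    let ?V = "V - C" and ?E = "induced E (V - C)"
    have blocks: "blocks V E = insert (insert c C) (blocks ?V ?E)"
      using blocks_delete_cut_off[OF sg V(2) cut leaf] .
    have "clique_tree ?V ?E" using clique_tree_delete_cut_off[OF sg less.prems(2) cut leaf] .
    moreover have "card ?V < card V" using C finV by (intro psubset_card_mono) auto
    moreover have "\<forall>B\<in>blocks ?V ?E. 3 \<le> card B" using less.prems(3) blocks by auto
    ultimately obtain B0 where zf: "zero_forcing_set ?V ?E B0"
      and card_B0: "card B0 + card (blocks ?V ?E) \<le> card ?V"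
      using less.hyps[OF _ simple_graph_induced[OF sg]] by blast
    have "3 \<le> card (insert c C)" and clique: "is_clique E (insert c C)"
      using less.prems(3) cliques blocks by auto
    moreover have finC: "finite C" using C(2) finV by (rule finite_subset)
    ultimately have two: "2 \<le> card C" using C(1) by simp
    obtain y where y: "y \<in> C" using C by blast
    have "zero_forcing_set V E (B0 \<union> (C - {y}))"
      using zero_forcing_set_extend_cut_off[OF sg cut clique y two zf] .
    moreover have "card (B0 \<union> (C - {y})) \<le> card B0 + (card C - 1)"
      using card_Un_le[of B0 "C - {y}"] y finC by simp
    moreover have "insert c C \<notin> blocks ?V ?E"
      using C(3) block_subset[of "insert c C" ?V ?E] by blast
    then have "card (blocks V E) = card (blocks ?V ?E) + 1"
      using blocks finite_blocks[of ?V ?E] finV by simp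
    moreover have "card V = card ?V + card C"
      using card_Diff_subset[OF finC C(2)] card_mono[OF finV C(2)] by simp
    ultimately show ?thesis using card_B0 two by (intro exI[of _ "B0 \<union> (C - {y})"]) simp
  qed
qed

lemma Z_clique_tree:
  assumes sg: "simple_graph V E" and tree: "clique_tree V E" and "\<forall>B\<in>blocks V E. 3 \<le> card B"
  shows "Z V E + card (blocks V E) = card V"
proof -
  have finV: "finite V" using sg by (simp add: simple_graph_def)
  obtain B0 where zf: "zero_forcing_set V E B0" and card_B0: "card B0 + card (blocks V E) \<le> card V"
    using clique_tree_zero_forcing_set[OF assms] by blast
  have cover: "\<And>u v. E u v \<Longrightarrow> \<exists>B\<in>blocks V E. u \<in> B \<and> v \<in> B"
    using edge_in_block[OF sg] by metis
  have "Z V E = card V - card (blocks V E)"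
  proof (rule Z_eqI[OF finV zf])
    show "card B0 \<le> card V - card (blocks V E)" using card_B0 by simp
    fix B1 assume "zero_forcing_set V E B1"
    then have "card V \<le> card B1 + card (blocks V E)"
      using tree cover finite_blocks[OF finV]
      by (intro card_le_zero_forcing_set_plus_clique_cover[OF finV]) (auto simp: clique_tree_def)
    then show "card V - card (blocks V E) \<le> card B1" by simp
  qed
  then show ?thesis using card_B0 by simp
qed

theorem theorem2p6:
  fixes V :: "'a set" and E :: "'a \<Rightarrow> 'a \<Rightarrow> bool"
  assumes "simple_graph V E"
    and "clique_tree V E"
    and "\<forall>B\<in>blocks V E. card B \<ge> 3"
  shows "int (Z V E) = (\<Sum>B\<in>blocks V E. int (Z B (induced E B)))
                      - (\<Sum>v\<in>V. int (block_index V E v) - 1)"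
proof -
  have finV: "finite V" using assms(1) by (simp add: simple_graph_def)
  have Z_block: "int (Z B (induced E B)) = int (card B) - 1" if B: "B \<in> blocks V E" for B
  proof -
    have "simple_graph B (induced E B)" using assms(1) block_subset[OF B] by (rule simple_graph_induced)
    moreover have "is_clique (induced E B) B"
      using assms(2) B by (auto simp: clique_tree_def is_clique_def induced_def)
    ultimately have "Z B (induced E B) = card B - 1" using assms(3) B by (intro Z_clique) auto
    moreover have "1 \<le> card B" using assms(3) B by fastforce
    ultimately show ?thesis by (simp add: of_nat_diff)
  qed
  have "(\<Sum>B\<in>blocks V E. int (Z B (induced E B))) = (\<Sum>B\<in>blocks V E. int (card B)) - int (card (blocks V E))"
    using Z_block by (simp add: sum_subtractf)
  moreover have "(\<Sum>v\<in>V. int (block_index V E v) - 1) = (\<Sum>B\<in>blocks V E. int (card B)) - int (card V)"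
    using sum_block_index[OF finV, of E] by (simp add: sum_subtractf flip: of_nat_sum)
  moreover have "int (Z V E) = int (card V) - int (card (blocks V E))"
    using Z_clique_tree[OF assms] by linarith
  ultimately show ?thesis by simp
qed

end
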